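(* Let $T$ be a tree of diameter $d$ on $n$ vertices with maximum Wiener index. Let $x$ be a special vertex of $T$ and let $T_1,T_2$ be components of $T-x$ such that each of them contains exactly one broom vertex of $T$ and $d(y,y')<d$ for all leaves $y\in V(T_1)$, $y'\in V(T_2)$. Let $y_1\in V(T_1)$, $y_2\in V(T_2)$ be leaves of $T$, $y_1'$ the broom vertex adjacent to $y_1$, $p=d(x,y_1)=d(x,y_2)$, and $t_i$ the number of leaves of $T$ in $T_i$ ($i\in\{1,2\}$). Let $T'=T_2\xrightarrow{T} y_1'$. If $t_1=t_2+1$, then $W(T)\geq W(T')$ if and only if $$t_1\geq \sqrt{\frac{p(3n+2p-7)+3}{12}}-p+\frac32.$$
   Context: All graphs are finite and simple; $d(u,v)$ denotes distance and $W(G)=\sum_{\{u,v\}\subseteq V(G)} d(u,v)$ is the Wiener index. A tree $T$ of order $n$ and diameter $d$ has maximum Wiener index if $W(T')\leq W(T)$ for every tree $T'$ of order $n$ and diameter $d$. A leaf is a vertex of degree $1$; a broom vertex of $T$ is a vertex adjacent to a leaf of $T$. A vertex $x$ of a tree $T$ of diameter $d$ is special if $\deg(x)\geq 3$ and there exist components $T_1,T_2$ of $T-x$ such that each contains exactly one broom vertex of $T$ and $d(y,y')<d$ for all leaves $y\in V(T_1)$, $y'\in V(T_2)$. For such $x,T_1,T_2$ and the broom vertex $y_1'$ of $T_1$, the tree $T_2\xrightarrow{T} y_1'$ is obtained from $T$ by deleting all vertices of $T_2$ and attaching $|V(T_2)|$ new leaves to $y_1'$. *)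

theory Defs
  imports Complex_Main
begin

definition simple_graph :: "'a set \<Rightarrow> ('a \<Rightarrow> 'a \<Rightarrow> bool) \<Rightarrow> bool" where
  "simple_graph V E \<longleftrightarrow> finite V \<and> (\<forall>u v. E u v \<longrightarrow> u \<in> V \<and> v \<in> V \<and> u \<noteq> v)
     \<and> (\<forall>u v. E u v \<longrightarrow> E v u)"

definition walk :: "'a set \<Rightarrow> ('a \<Rightarrow> 'a \<Rightarrow> bool) \<Rightarrow> 'a list \<Rightarrow> bool" where
  "walk V E xs \<longleftrightarrow> xs \<noteq> [] \<and> set xs \<subseteq> V \<and> successively E xs"

definition connected_graph :: "'a set \<Rightarrow> ('a \<Rightarrow> 'a \<Rightarrow> bool) \<Rightarrow> bool" where
  "connected_graph V E \<longleftrightarrow>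
     (\<forall>u\<in>V. \<forall>v\<in>V. \<exists>xs. walk V E xs \<and> hd xs = u \<and> last xs = v)"

definition is_cycle :: "'a set \<Rightarrow> ('a \<Rightarrow> 'a \<Rightarrow> bool) \<Rightarrow> 'a list \<Rightarrow> bool" where
  "is_cycle V E xs \<longleftrightarrow> walk V E xs \<and> length xs \<ge> 3 \<and> distinct xs \<and> E (last xs) (hd xs)"

definition acyclic_graph :: "'a set \<Rightarrow> ('a \<Rightarrow> 'a \<Rightarrow> bool) \<Rightarrow> bool" where
  "acyclic_graph V E \<longleftrightarrow> \<not> (\<exists>xs. is_cycle V E xs)"

definition tree :: "'a set \<Rightarrow> ('a \<Rightarrow> 'a \<Rightarrow> bool) \<Rightarrow> bool" where
  "tree V E \<longleftrightarrow> simple_graph V E \<and> V \<noteq> {} \<and> connected_graph V E \<and> acyclic_graph V E"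

definition dist :: "'a set \<Rightarrow> ('a \<Rightarrow> 'a \<Rightarrow> bool) \<Rightarrow> 'a \<Rightarrow> 'a \<Rightarrow> nat" where
  "dist V E u v = (LEAST k. \<exists>xs. walk V E xs \<and> hd xs = u \<and> last xs = v \<and> length xs = Suc k)"

definition wiener :: "'a set \<Rightarrow> ('a \<Rightarrow> 'a \<Rightarrow> bool) \<Rightarrow> nat" where
  "wiener V E = (\<Sum>u\<in>V. \<Sum>v\<in>V. dist V E u v) div 2"

definition diameter :: "'a set \<Rightarrow> ('a \<Rightarrow> 'a \<Rightarrow> bool) \<Rightarrow> nat" where
  "diameter V E = Max {dist V E u v | u v. u \<in> V \<and> v \<in> V}"

definition degree :: "'a set \<Rightarrow> ('a \<Rightarrow> 'a \<Rightarrow> bool) \<Rightarrow> 'a \<Rightarrow> nat" where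
  "degree V E u = card {v \<in> V. E u v}"

definition leaf :: "'a set \<Rightarrow> ('a \<Rightarrow> 'a \<Rightarrow> bool) \<Rightarrow> 'a \<Rightarrow> bool" where
  "leaf V E u \<longleftrightarrow> u \<in> V \<and> degree V E u = 1"

definition broom_vertex :: "'a set \<Rightarrow> ('a \<Rightarrow> 'a \<Rightarrow> bool) \<Rightarrow> 'a \<Rightarrow> bool" where
  "broom_vertex V E u \<longleftrightarrow> u \<in> V \<and> (\<exists>y. leaf V E y \<and> E u y)"

text \<open>Tree of order n and diameter d with maximum Wiener index (compared with all trees
of the same order and diameter; vertex sets taken in the same type, which loses nothing
since the Wiener index and diameter are isomorphism invariants).\<close>
definition max_wiener_tree :: "'a set \<Rightarrow> ('a \<Rightarrow> 'a \<Rightarrow> bool) \<Rightarrow> bool" where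
  "max_wiener_tree V E \<longleftrightarrow> tree V E \<and>
     (\<forall>(V' :: 'a set) (E' :: 'a \<Rightarrow> 'a \<Rightarrow> bool). tree V' E' \<and> card V' = card V \<and> diameter V' E' = diameter V E
        \<longrightarrow> wiener V' E' \<le> wiener V E)"

definition del_V :: "'a set \<Rightarrow> 'a \<Rightarrow> 'a set" where
  "del_V V x = V - {x}"

definition del_E :: "('a \<Rightarrow> 'a \<Rightarrow> bool) \<Rightarrow> 'a \<Rightarrow> 'a \<Rightarrow> 'a \<Rightarrow> bool" where
  "del_E E x = (\<lambda>u v. E u v \<and> u \<noteq> x \<and> v \<noteq> x)"

definition component :: "'a set \<Rightarrow> ('a \<Rightarrow> 'a \<Rightarrow> bool) \<Rightarrow> 'a set \<Rightarrow> bool" where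
  "component V E C \<longleftrightarrow> C \<noteq> {} \<and> C \<subseteq> V \<and>
     (\<forall>u\<in>C. \<forall>v\<in>C. \<exists>xs. walk C E xs \<and> hd xs = u \<and> last xs = v) \<and>
     (\<forall>u\<in>C. \<forall>v\<in>V. E u v \<longrightarrow> v \<in> C)"

definition special_pair :: "'a set \<Rightarrow> ('a \<Rightarrow> 'a \<Rightarrow> bool) \<Rightarrow> 'a \<Rightarrow> 'a set \<Rightarrow> 'a set \<Rightarrow> bool" where
  "special_pair V E x T1 T2 \<longleftrightarrow>
     component (del_V V x) (del_E E x) T1 \<and> component (del_V V x) (del_E E x) T2 \<and>
     card {b \<in> T1. broom_vertex V E b} = 1 \<and> card {b \<in> T2. broom_vertex V E b} = 1 \<and>
     (\<forall>y\<in>T1. \<forall>y'\<in>T2. leaf V E y \<and> leaf V E y' \<longrightarrow> dist V E y y' < diameter V E)"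

definition special_vertex :: "'a set \<Rightarrow> ('a \<Rightarrow> 'a \<Rightarrow> bool) \<Rightarrow> 'a \<Rightarrow> bool" where
  "special_vertex V E x \<longleftrightarrow> x \<in> V \<and> degree V E x \<ge> 3 \<and>
     (\<exists>T1 T2. T1 \<noteq> T2 \<and> special_pair V E x T1 T2)"

text \<open>The tree T2 -> y1' (relative to T): delete the vertices of T2 and attach card T2
new leaves (Inr 0, ..., Inr (card T2 - 1)) to y1'. Old vertices are tagged Inl.\<close>
definition move_V :: "'a set \<Rightarrow> 'a set \<Rightarrow> ('a + nat) set" where
  "move_V V T2 = Inl ` (V - T2) \<union> Inr ` {..<card T2}"

definition move_E :: "('a \<Rightarrow> 'a \<Rightarrow> bool) \<Rightarrow> 'a set \<Rightarrow> 'a \<Rightarrow> ('a + nat) \<Rightarrow> ('a + nat) \<Rightarrow> bool" where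
  "move_E E T2 y = (\<lambda>a b. case (a, b) of
       (Inl u, Inl v) \<Rightarrow> E u v \<and> u \<notin> T2 \<and> v \<notin> T2
     | (Inl u, Inr i) \<Rightarrow> u = y \<and> i < card T2
     | (Inr i, Inl u) \<Rightarrow> u = y \<and> i < card T2
     | (Inr i, Inr j) \<Rightarrow> False)"

end

theory Submission
  imports Defs
begin

(*
  Distances inside V - T2 are the same in T and in T'.  In T every path between V - T2 and T2
  passes through x, and in T' every path from V - T2 to a new leaf passes through y1'.  A
  component of T - x containing exactly one broom vertex b is a path from x to b with leaves
  hanging at b, so all distances inside T1 and T2 are explicit.  Summing up gives, with
  q = p - 1 the length of that path,
    6 (W(T) - W(T')) = q P(n, q, t1, t2)
  for an explicit polynomial P; for t1 = t2 + 1 one has P = 12 ((t1 + p - 3/2)^2 - X) with X the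
  radicand in the statement.
*)

section \<open>Walks and distances\<close>

lemma walk_length_Suc: "walk V E xs \<Longrightarrow> length xs = Suc (length xs - 1)"
  by (cases xs) (auto simp: walk_def)

lemma dist_le_walk_length: "walk V E xs \<Longrightarrow> dist V E (hd xs) (last xs) \<le> length xs - 1"
  unfolding dist_def by (rule Least_le) (use walk_length_Suc in blast)

lemma dist_eqI:
  assumes "walk V E xs" "hd xs = u" "last xs = v" "length xs = Suc m"
    and "\<And>ys. walk V E ys \<Longrightarrow> hd ys = u \<Longrightarrow> last ys = v \<Longrightarrow> m \<le> length ys - 1"
  shows "dist V E u v = m"
  unfolding dist_def
proof (rule Least_equality)
  show "\<exists>xs. walk V E xs \<and> hd xs = u \<and> last xs = v \<and> length xs = Suc m"
    using assms by blast
next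
  fix k assume "\<exists>xs. walk V E xs \<and> hd xs = u \<and> last xs = v \<and> length xs = Suc k"
  then obtain ys where "walk V E ys" "hd ys = u" "last ys = v" "length ys = Suc k" by blast
  with assms(5)[of ys] show "m \<le> k" by simp
qed

lemma walk_take:
  assumes "walk V E xs" "0 < n"
  shows "walk V E (take n xs)"
proof -
  have "successively E (take n xs @ drop n xs)" using assms(1) by (simp add: walk_def)
  then have "successively E (take n xs)" by (simp only: successively_append_iff)
  with assms show ?thesis using set_take_subset[of n xs] by (auto simp: walk_def)
qed

lemma walk_drop:
  assumes "walk V E xs" "n < length xs"
  shows "walk V E (drop n xs)"
proof -
  have "successively E (take n xs @ drop n xs)" using assms(1) by (simp add: walk_def)
  then have "successively E (drop n xs)" by (simp only: successively_append_iff)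
  with assms show ?thesis using set_drop_subset[of n xs] by (auto simp: walk_def)
qed

lemma dist_same_vertex: "u \<in> V \<Longrightarrow> dist V E u u = 0"
  using dist_le_walk_length[of V E "[u]"] by (simp add: walk_def)

lemma walk_rev:
  assumes "\<And>u v. E u v \<Longrightarrow> E v u" "walk V E xs"
  shows "walk V E (rev xs)"
  using assms unfolding walk_def by (auto intro: successively_mono)

lemma dist_sym:
  assumes sym: "\<And>u v. E u v \<Longrightarrow> E v u"
  shows "dist V E u v = dist V E v u"
proof -
  have rev_ex: "\<exists>xs. walk V E xs \<and> hd xs = v \<and> last xs = u \<and> length xs = k"
    if "walk V E xs" "hd xs = u" "last xs = v" "length xs = k" for u v xs k
    using that walk_rev[OF sym that(1)]
      by (intro exI[of _ "rev xs"]) (auto simp: walk_def hd_rev last_rev)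
  have "(\<exists>xs. walk V E xs \<and> hd xs = u \<and> last xs = v \<and> length xs = Suc k) \<longleftrightarrow>
        (\<exists>xs. walk V E xs \<and> hd xs = v \<and> last xs = u \<and> length xs = Suc k)" for k
    using rev_ex by blast
  then show ?thesis unfolding dist_def by simp
qed

lemma walk_lipschitz_bound:
  assumes "walk V E xs" "\<And>a b. E a b \<Longrightarrow> f b \<le> f a + (1::nat)"
  shows "f (last xs) \<le> f (hd xs) + (length xs - 1)"
proof -
  have "successively E xs \<Longrightarrow> xs \<noteq> [] \<Longrightarrow> f (last xs) \<le> f (hd xs) + (length xs - 1)"
  proof (induction xs rule: induct_list012)
    case (3 a b xs)
    then have "f (last (b # xs)) \<le> f b + length xs" by simp
    with assms(2)[of a b] "3.prems" show ?case by simp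
  qed simp_all
  with assms(1) show ?thesis by (simp add: walk_def)
qed

lemma even_double_sum_symmetric:
  fixes g :: "'b \<Rightarrow> 'b \<Rightarrow> nat"
  assumes "finite S" "\<And>u v. u \<in> S \<Longrightarrow> v \<in> S \<Longrightarrow> g u v = g v u" "\<And>u. u \<in> S \<Longrightarrow> g u u = 0"
  shows "even (\<Sum>u\<in>S. \<Sum>v\<in>S. g u v)"
  using assms
proof (induction S rule: finite_induct)
  case (insert a S)
  have "(\<Sum>u\<in>insert a S. \<Sum>v\<in>insert a S. g u v) =
        2 * (\<Sum>v\<in>S. g a v) + (\<Sum>u\<in>S. \<Sum>v\<in>S. g u v)"
    using insert.hyps insert.prems
    by (simp add: sum.distrib sum.insert cong: sum.cong)
  with insert show ?case by simp
qed simp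

lemma double_wiener:
  assumes "finite V" "\<And>u v. E u v \<Longrightarrow> E v u"
  shows "2 * wiener V E = (\<Sum>u\<in>V. \<Sum>v\<in>V. dist V E u v)"
proof -
  have "even (\<Sum>u\<in>V. \<Sum>v\<in>V. dist V E u v)"
    by (rule even_double_sum_symmetric) (use assms dist_sym[OF assms(2)] dist_same_vertex in auto)
  then show ?thesis unfolding wiener_def by simp
qed

section \<open>Paths and leaves in trees\<close>

locale tree_graph =
  fixes V :: "'a set" and E :: "'a \<Rightarrow> 'a \<Rightarrow> bool"
  assumes tree: "tree V E"
begin

lemma finite_V: "finite V"
  and edge_in_V: "E u v \<Longrightarrow> u \<in> V" "E u v \<Longrightarrow> v \<in> V"
  and edge_sym: "E u v \<Longrightarrow> E v u"
  and edge_irrefl: "E u v \<Longrightarrow> u \<noteq> v"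
  using tree by (auto simp: tree_def simple_graph_def)

lemma shortest_walk_exists:
  assumes "u \<in> V" "v \<in> V"
  shows "\<exists>xs. walk V E xs \<and> hd xs = u \<and> last xs = v \<and> length xs = Suc (dist V E u v)"
proof -
  obtain xs where "walk V E xs" "hd xs = u" "last xs = v"
    using tree assms unfolding tree_def connected_graph_def by blast
  then have "\<exists>k xs. walk V E xs \<and> hd xs = u \<and> last xs = v \<and> length xs = Suc k"
    using walk_length_Suc by blast
  then show ?thesis unfolding dist_def by (rule LeastI_ex)
qed

lemma shortest_walk_distinct:
  assumes "walk V E xs" "length xs = Suc (dist V E (hd xs) (last xs))"
  shows "distinct xs"
proof (rule ccontr)
  assume "\<not> distinct xs"
  then obtain as bs cs c where xs: "xs = as @ [c] @ bs @ [c] @ cs"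
    using not_distinct_decomp by blast
  let ?ys = "as @ [c] @ cs"
  have "walk V E ?ys" using assms(1) unfolding xs walk_def
    by (auto simp: successively_append_iff successively_Cons)
  moreover have "hd ?ys = hd xs" "last ?ys = last xs" unfolding xs by (simp_all add: hd_append)
  ultimately have "dist V E (hd xs) (last xs) \<le> length ?ys - 1"
    using dist_le_walk_length[of V E ?ys] by simp
  then show False using assms(2) unfolding xs by simp
qed

lemma tree_dist_triangle:
  assumes "u \<in> V" "v \<in> V" "w \<in> V"
  shows "dist V E u w \<le> dist V E u v + dist V E v w"
proof -
  obtain xs where xs: "walk V E xs" "hd xs = u" "last xs = v" "length xs = Suc (dist V E u v)"
    using shortest_walk_exists assms by blast
  obtain ys where ys: "walk V E ys" "hd ys = v" "last ys = w" "length ys = Suc (dist V E v w)"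
    using shortest_walk_exists assms by blast
  have "walk V E (xs @ tl ys)" using xs ys unfolding walk_def
    by (cases ys) (auto simp: successively_append_iff successively_Cons)
  moreover have "hd (xs @ tl ys) = u" using xs by (simp add: walk_def)
  moreover have "last (xs @ tl ys) = w"
    using xs ys by (cases ys) (auto simp: walk_def)
  ultimately show ?thesis using dist_le_walk_length[of V E "xs @ tl ys"] xs ys by auto
qed

lemma tree_dist_sym: "dist V E u v = dist V E v u"
  using dist_sym edge_sym by metis

lemma dist_across_edge: "u \<in> V \<Longrightarrow> E a b \<Longrightarrow> dist V E u b \<le> dist V E u a + 1"
  using tree_dist_triangle[of u a b] dist_le_walk_length[of V E "[a, b]"] edge_in_V
  by (fastforce simp: walk_def)

lemma distinct_walk_closing_edge:
  assumes "walk V E xs" "distinct xs" "E (last xs) (hd xs)"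
  shows "length xs < 3"
  using tree assms unfolding tree_def acyclic_graph_def is_cycle_def by auto

lemma diverging_paths_never_meet:
  assumes "walk V E (a # xs)" "walk V E (a # ys)" "distinct (a # xs)" "distinct (a # ys)"
    and "xs \<noteq> []" "ys \<noteq> []" "hd xs \<noteq> hd ys" "last xs = last ys"
  shows False
proof -
  txt \<open>Follow xs up to its first vertex z on ys and return along ys: with a this closes a cycle.\<close>
  have "\<exists>z\<in>set xs. z \<in> set ys"
    using last_in_set[OF assms(5)] last_in_set[OF assms(6)] assms(8) by auto
  then obtain us z ws where xs: "xs = us @ z # ws" and "z \<in> set ys"
    and us: "\<forall>u\<in>set us. u \<notin> set ys"
    using split_list_first_prop[of xs "\<lambda>z. z \<in> set ys"] by blast
  then obtain vs ws' where ys: "ys = vs @ z # ws'" by (metis split_list)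
  let ?c = "a # us @ z # rev vs"
  have "successively E (us @ [z])" "successively E (vs @ [z])"
    using assms(1,2) unfolding xs ys walk_def
    by (auto simp: successively_append_iff successively_Cons)
  then have "successively E (us @ z # rev vs)"
    using edge_sym
      by (auto simp: successively_append_iff successively_Cons hd_rev intro: successively_mono)
  moreover have "E a (hd xs)" "E a (hd ys)"
    using assms(1,2,5,6) by (auto simp: walk_def successively_Cons neq_Nil_conv)
  ultimately have "walk V E ?c"
    using assms(1,2) xs ys by (cases us) (auto simp: walk_def successively_Cons)
  moreover have "distinct ?c" using assms(3,4) xs ys us by auto
  moreover have "E (last ?c) (hd ?c)"
    using \<open>E a (hd ys)\<close> edge_sym ys by (cases vs) (auto simp: last_rev hd_rev)
  moreover have "length ?c \<ge> 3" using assms(7) xs ys by (cases us; cases vs) auto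
  ultimately show False using distinct_walk_closing_edge by fastforce
qed

lemma path_unique:
  "walk V E xs \<Longrightarrow> walk V E ys \<Longrightarrow> distinct xs \<Longrightarrow> distinct ys \<Longrightarrow>
   hd xs = hd ys \<Longrightarrow> last xs = last ys \<Longrightarrow> xs = ys"
proof (induction xs arbitrary: ys)
  case Nil then show ?case by (simp add: walk_def)
next
  case (Cons a xs')
  obtain ys' where ys: "ys = a # ys'" using Cons.prems by (cases ys) (auto simp: walk_def)
  consider "xs' = []" | "ys' = []" | "xs' \<noteq> []" "ys' \<noteq> []" by blast
  then show ?case
  proof cases
    case 1
    with Cons.prems ys show ?thesis by (cases ys' rule: rev_cases) auto
  next
    case 2
    with Cons.prems ys show ?thesis by (cases xs' rule: rev_cases) auto
  next
    case 3
    have "hd xs' = hd ys'"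
    proof (rule ccontr)
      assume "hd xs' \<noteq> hd ys'"
      then show False
        using diverging_paths_never_meet[of a xs' ys'] Cons.prems(1-4,6) ys 3 by simp
    qed
    moreover have "walk V E xs'" "walk V E ys'"
      using Cons.prems(1,2) ys 3 by (auto simp: walk_def successively_Cons neq_Nil_conv)
    moreover have "distinct xs'" "distinct ys'" "last xs' = last ys'"
      using Cons.prems(3,4,6) ys 3 by simp_all
    ultimately have "xs' = ys'" using Cons.IH by blast
    then show ?thesis using ys by simp
  qed
qed

lemma path_dist:
  assumes "walk V E xs" "distinct xs"
  shows "dist V E (hd xs) (last xs) = length xs - 1"
proof -
  have "hd xs \<in> V" "last xs \<in> V" using assms(1) by (auto simp: walk_def)
  then obtain ys where ys: "walk V E ys" "hd ys = hd xs" "last ys = last xs"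
    "length ys = Suc (dist V E (hd xs) (last xs))" using shortest_walk_exists by blast
  moreover from ys have "distinct ys" using shortest_walk_distinct by simp
  ultimately have "ys = xs" using path_unique[OF _ assms(1) _ assms(2)] by simp
  then show ?thesis using ys by simp
qed

lemma path_nth_dist:
  assumes "walk V E xs" "distinct xs" "i \<le> j" "j < length xs"
  shows "dist V E (xs ! i) (xs ! j) = j - i"
proof -
  let ?ys = "drop i (take (Suc j) xs)"
  have "walk V E (take (Suc j) xs)" using assms(1) by (rule walk_take) simp
  then have "walk V E ?ys" by (rule walk_drop) (use assms(3,4) in simp)
  moreover have "distinct ?ys" using assms(2) by (simp add: distinct_drop)
  moreover have "hd ?ys = xs ! i" "last ?ys = xs ! j" "length ?ys = Suc (j - i)"
    using assms by (simp_all add: hd_drop_conv_nth last_conv_nth)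
  ultimately show ?thesis using path_dist[of ?ys] by simp
qed

definition tree_path :: "'a \<Rightarrow> 'a \<Rightarrow> 'a list" where
  "tree_path u v = (THE xs. walk V E xs \<and> distinct xs \<and> hd xs = u \<and> last xs = v)"

lemma tree_path:
  assumes "u \<in> V" "v \<in> V"
  shows "walk V E (tree_path u v)" "distinct (tree_path u v)"
    "hd (tree_path u v) = u" "last (tree_path u v) = v"
proof -
  obtain xs where xs: "walk V E xs" "hd xs = u" "last xs = v" "length xs = Suc (dist V E u v)"
    using shortest_walk_exists[OF assms] by blast
  have "distinct xs" using shortest_walk_distinct[OF xs(1)] xs(2-4) by simp
  have "\<exists>!xs. walk V E xs \<and> distinct xs \<and> hd xs = u \<and> last xs = v"
  proof (rule ex1I[of _ xs])
    fix ys assume "walk V E ys \<and> distinct ys \<and> hd ys = u \<and> last ys = v"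
    then show "ys = xs" using path_unique[of ys xs] xs \<open>distinct xs\<close> by simp
  qed (use xs \<open>distinct xs\<close> in simp)
  then have "walk V E (tree_path u v) \<and> distinct (tree_path u v) \<and>
             hd (tree_path u v) = u \<and> last (tree_path u v) = v"
    unfolding tree_path_def by (rule theI')
  then show "walk V E (tree_path u v)" "distinct (tree_path u v)"
    "hd (tree_path u v) = u" "last (tree_path u v) = v" by blast+
qed

lemma length_tree_path:
  assumes "u \<in> V" "v \<in> V"
  shows "length (tree_path u v) = Suc (dist V E u v)"
  using path_dist[OF tree_path(1,2)[OF assms]] tree_path(1,3,4)[OF assms] walk_length_Suc by metis

lemma tree_path_unique:
  assumes "walk V E xs" "distinct xs"
  shows "tree_path (hd xs) (last xs) = xs"
proof -
  have "hd xs \<in> V" "last xs \<in> V" using assms(1) by (auto simp: walk_def)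
  from tree_path[OF this] show ?thesis using path_unique[OF _ assms(1) _ assms(2)] by simp
qed

lemma leaf_neighbour_unique:
  assumes "leaf V E l" "E l c" "E l c'"
  shows "c = c'"
proof -
  have "card {v \<in> V. E l v} = 1" using assms(1) by (simp add: leaf_def degree_def)
  then obtain w where w: "{v \<in> V. E l v} = {w}" by (rule card_1_singletonE)
  have "c \<in> {v \<in> V. E l v}" "c' \<in> {v \<in> V. E l v}" using assms(2,3) edge_in_V by auto
  then show ?thesis unfolding w by simp
qed

lemma non_leaf_other_neighbour:
  assumes "E l c" "\<not> leaf V E l"
  shows "\<exists>z. E l z \<and> z \<noteq> c"
proof (rule ccontr)
  assume "\<not> ?thesis"
  then have "{v \<in> V. E l v} = {c}" using assms(1) edge_in_V(2) by blast
  moreover have "l \<in> V" using assms(1) by (rule edge_in_V)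
  ultimately show False using assms(2) by (simp add: leaf_def degree_def)
qed

lemma interior_not_leaf:
  assumes "walk V E xs" "distinct xs" "0 < i" "Suc i < length xs"
  shows "\<not> leaf V E (xs ! i)"
proof
  assume "leaf V E (xs ! i)"
  moreover have "E (xs ! (i - 1)) (xs ! Suc (i - 1))" "E (xs ! i) (xs ! Suc i)"
    using assms(1,4) successively_nth[of E xs "i - 1"] successively_nth[of E xs i]
    by (simp_all add: walk_def)
  then have "E (xs ! i) (xs ! (i - 1))" "E (xs ! i) (xs ! Suc i)"
    using assms(3) edge_sym by simp_all
  moreover have "xs ! (i - 1) \<noteq> xs ! Suc i" using assms(2-4) by (simp add: nth_eq_iff_index_eq)
  ultimately show False using leaf_neighbour_unique by blast
qed

lemma neighbour_of_path_end:
  assumes "walk V E xs" "distinct xs" "length xs \<ge> 2"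
    and "E (last xs) z" "z \<noteq> xs ! (length xs - 2)"
  shows "z \<notin> set xs"
proof
  assume "z \<in> set xs"
  then obtain i where i: "i < length xs" "xs ! i = z" by (auto simp: in_set_conv_nth)
  have "last xs = xs ! (length xs - 1)" using assms(3) by (intro last_conv_nth) auto
  then have "i \<noteq> length xs - 1" using i edge_irrefl[OF assms(4)] by auto
  moreover have "i \<noteq> length xs - 2" using i assms(5) by auto
  ultimately have "i + 3 \<le> length xs" using i(1) by linarith
  txt \<open>The edge back to z closes the tail of xs starting at z into a cycle.\<close>
  let ?d = "drop i xs"
  have "walk V E ?d" using walk_drop[OF assms(1) i(1)] .
  moreover have "distinct ?d" using assms(2) by simp
  moreover have "E (last ?d) (hd ?d)" using assms(4) i by (simp add: hd_drop_conv_nth)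
  moreover have "length ?d \<ge> 3" using \<open>i + 3 \<le> length xs\<close> by simp
  ultimately show False using distinct_walk_closing_edge by (meson not_less)
qed

lemma extend_to_leaf:
  assumes "walk V E xs" "distinct xs" "length xs \<ge> 2"
  shows "\<exists>zs. walk V E (xs @ zs) \<and> distinct (xs @ zs) \<and> leaf V E (last (xs @ zs))"
  using assms
proof (induction "card V - length xs" arbitrary: xs rule: less_induct)
  case less
  let ?l = "last xs" and ?c = "xs ! (length xs - 2)"
  have "E ?c ?l"
    using less.prems successively_nth[of E xs "length xs - 2"]
    by (simp add: walk_def last_conv_nth numeral_2_eq_2 Suc_diff_Suc)
  show ?case
  proof (cases "leaf V E ?l")
    case True
    then show ?thesis using less.prems by (intro exI[of _ "[]"]) simp
  next
    case False
    then obtain z where z: "E ?l z" "z \<noteq> ?c"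
      using non_leaf_other_neighbour edge_sym[OF \<open>E ?c ?l\<close>] by blast
    let ?ys = "xs @ [z]"
    have "walk V E ?ys" "distinct ?ys" "length ?ys \<ge> 2"
      using less.prems z(1) neighbour_of_path_end[OF less.prems z] edge_in_V
      by (auto simp: walk_def successively_append_iff)
    moreover have "length ?ys \<le> card V"
      using card_mono[OF finite_V, of "set ?ys"] distinct_card[OF \<open>distinct ?ys\<close>]
        \<open>walk V E ?ys\<close> by (simp add: walk_def)
    ultimately obtain zs where "walk V E (?ys @ zs)" "distinct (?ys @ zs)"
      "leaf V E (last (?ys @ zs))"
      using less.hyps[of ?ys] by fastforce
    then show ?thesis by (intro exI[of _ "z # zs"]) simp
  qed
qed

lemma path_through_to_leaf:
  assumes "u \<in> V" "v \<in> V" "u \<noteq> v"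
  obtains ws l where "walk V E (u # ws @ [l])" "distinct (u # ws @ [l])" "leaf V E l"
    "v \<in> set (ws @ [l])"
proof -
  let ?P = "tree_path u v"
  have P: "walk V E ?P" "distinct ?P" "hd ?P = u" "last ?P = v"
    using tree_path assms(1,2) by auto
  then obtain rest where P_eq: "?P = u # rest" by (cases ?P) (auto simp: walk_def)
  then have "rest \<noteq> []" using P(3,4) assms(3) by auto
  then have "length ?P \<ge> 2" using P_eq by (cases rest) auto
  then obtain zs where zs: "walk V E (?P @ zs)" "distinct (?P @ zs)" "leaf V E (last (?P @ zs))"
    using extend_to_leaf P(1,2) by blast
  define ws l where "ws = butlast (rest @ zs)" and "l = last (rest @ zs)"
  have "ws @ [l] = rest @ zs" using \<open>rest \<noteq> []\<close> by (simp add: ws_def l_def)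
  then have split: "?P @ zs = u # ws @ [l]" by (simp add: P_eq)
  have "v = last rest" using P(4) P_eq \<open>rest \<noteq> []\<close> by simp
  then have "v \<in> set rest" using \<open>rest \<noteq> []\<close> by simp
  then have "v \<in> set (ws @ [l])" using \<open>ws @ [l] = rest @ zs\<close> by simp
  with zs show ?thesis unfolding split by (intro that) simp_all
qed

end

section \<open>Components of a tree minus a vertex\<close>

locale tree_component = tree_graph +
  fixes x :: 'a and C :: "'a set"
  assumes root_in_V: "x \<in> V" and component: "component (del_V V x) (del_E E x) C"
begin

lemma component_subset: "C \<subseteq> V"
  and root_notin_component: "x \<notin> C"
  and component_nonempty: "C \<noteq> {}"
  using component by (auto simp: component_def del_V_def)

lemma finite_component: "finite C"
  using component_subset finite_V by (rule finite_subset)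

lemma component_closed: "u \<in> C \<Longrightarrow> E u v \<Longrightarrow> v \<noteq> x \<Longrightarrow> v \<in> C"
  using component root_notin_component edge_in_V
  unfolding component_def del_E_def del_V_def by blast

lemma component_has_neighbour:
  assumes "u \<in> C" "v \<in> C" "u \<noteq> v"
  shows "\<exists>w\<in>C. E u w"
proof -
  obtain ws where ws: "walk C (del_E E x) ws" "hd ws = u" "last ws = v"
    using component assms(1,2) unfolding component_def by blast
  then obtain w ws' where "ws = u # w # ws'"
    using assms(3) by (cases ws rule: remdups_adj.cases) (auto simp: walk_def)
  with ws(1) show ?thesis by (auto simp: walk_def del_E_def)
qed

lemma walk_avoiding_root:
  assumes "successively E ws" "x \<notin> set ws" "a \<in> set ws"
  shows "a \<in> C \<longleftrightarrow> hd ws \<in> C"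
  using assms
proof (induction ws)
  case (Cons w ws)
  show ?case
  proof (cases "a = w")
    case False
    then have "ws \<noteq> []" "a \<in> set ws" using Cons.prems(3) by auto
    then have "E w (hd ws)" "hd ws \<in> set ws" "a \<in> C \<longleftrightarrow> hd ws \<in> C"
      using Cons by (auto simp: successively_Cons neq_Nil_conv)
    moreover have "w \<noteq> x" "hd ws \<noteq> x" using Cons.prems(2) \<open>hd ws \<in> set ws\<close> by auto
    ultimately show ?thesis using component_closed edge_sym by auto
  qed simp
qed simp

lemma other_component_subset:
  assumes "component (del_V V x) (del_E E x) C'" "z \<in> C" "z \<in> C'"
  shows "C' \<subseteq> C"
proof
  fix u assume "u \<in> C'"
  then obtain ws where ws: "walk C' (del_E E x) ws" "hd ws = z" "last ws = u"
    using assms(1,3) unfolding component_def by blast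
  have "successively E ws" using ws(1) unfolding walk_def del_E_def
    by (auto intro: successively_mono)
  moreover have "x \<notin> set ws" using ws(1) assms(1) by (auto simp: walk_def component_def del_V_def)
  moreover have "u \<in> set ws" using ws(1,3) by (auto simp: walk_def)
  ultimately show "u \<in> C" using walk_avoiding_root ws(2) assms(2) by blast
qed

lemma dist_through_root:
  assumes "v \<in> C" "w \<in> V" "w \<notin> C"
  shows "dist V E v w = dist V E v x + dist V E x w"
proof (rule antisym)
  show "dist V E v w \<le> dist V E v x + dist V E x w"
    using tree_dist_triangle assms component_subset root_in_V by blast
next
  have "v \<in> V" using assms(1) component_subset by blast
  then obtain xs where xs: "walk V E xs" "hd xs = v" "last xs = w" "length xs = Suc (dist V E v w)"
    using shortest_walk_exists assms(2) by blast
  have "x \<in> set xs"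
  proof (rule ccontr)
    assume "x \<notin> set xs"
    then have "w \<in> C \<longleftrightarrow> v \<in> C"
      using walk_avoiding_root[of xs w] xs by (auto simp: walk_def)
    then show False using assms by simp
  qed
  then obtain as bs where xs_split: "xs = as @ x # bs" by (meson split_list)
  have "walk V E (as @ [x])" "walk V E (x # bs)" using xs(1) unfolding xs_split walk_def
    by (simp_all add: successively_append_iff successively_Cons)
  moreover have "hd (as @ [x]) = v" "last (x # bs) = w"
    using xs(2,3) unfolding xs_split by (auto simp: hd_append)
  ultimately have "dist V E v x \<le> length as" "dist V E x w \<le> length bs"
    using dist_le_walk_length by fastforce+
  then show "dist V E v x + dist V E x w \<le> dist V E v w" using xs(4) xs_split by simp
qed

lemma double_wiener_split:
  "2 * wiener V E = (\<Sum>u\<in>V - C. \<Sum>v\<in>V - C. dist V E u v)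
     + 2 * (card (V - C) * (\<Sum>v\<in>C. dist V E x v) + card C * (\<Sum>u\<in>V - C. dist V E x u))
     + (\<Sum>u\<in>C. \<Sum>v\<in>C. dist V E u v)"
proof -
  let ?A = "V - C" and ?d = "dist V E"
  have split: "(\<Sum>u\<in>V. f u) = (\<Sum>u\<in>?A. f u) + (\<Sum>u\<in>C. f u)" for f :: "'a \<Rightarrow> nat"
    by (rule sum.subset_diff[OF component_subset finite_V])
  have cross: "?d u v = ?d x u + ?d x v" if "u \<in> ?A" "v \<in> C" for u v
    using dist_through_root[of v u] that tree_dist_sym[of x v] tree_dist_sym[of u v] by simp
  have "(\<Sum>u\<in>?A. \<Sum>v\<in>C. ?d u v) = (\<Sum>u\<in>?A. (\<Sum>v\<in>C. ?d x v) + card C * ?d x u)"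
    using cross by (simp add: sum.distrib)
  also have "\<dots> = card ?A * (\<Sum>v\<in>C. ?d x v) + card C * (\<Sum>u\<in>?A. ?d x u)"
    by (simp add: sum.distrib sum_distrib_left)
  finally have AC: "(\<Sum>u\<in>?A. \<Sum>v\<in>C. ?d u v) = \<dots>" .
  have CA: "(\<Sum>u\<in>C. \<Sum>v\<in>?A. ?d u v) = (\<Sum>u\<in>?A. \<Sum>v\<in>C. ?d u v)"
    by (subst sum.swap) (simp add: tree_dist_sym)
  have "2 * wiener V E = (\<Sum>u\<in>V. \<Sum>v\<in>V. ?d u v)"
    using double_wiener finite_V edge_sym by blast
  also have "\<dots> = (\<Sum>u\<in>?A. \<Sum>v\<in>?A. ?d u v) + (\<Sum>u\<in>?A. \<Sum>v\<in>C. ?d u v)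
      + (\<Sum>u\<in>C. \<Sum>v\<in>?A. ?d u v) + (\<Sum>u\<in>C. \<Sum>v\<in>C. ?d u v)"
    by (simp add: split sum.distrib)
  finally show ?thesis unfolding CA AC by simp
qed

end

section \<open>Components with a single broom vertex\<close>

lemma sum_Icc_real: "2 * (\<Sum>i = 1..n. real i) = real n * (real n + 1)"
  using double_gauss_sum_from_Suc_0[of n, where 'a = real] by simp

lemma sum_abs_diff_Icc:
  "3 * (\<Sum>i = 1..n. \<Sum>j = 1..n. \<bar>real i - real j\<bar>) = (real n - 1) * real n * (real n + 1)"
proof (induction n)
  case (Suc n)
  have row: "(\<Sum>i = 1..n. \<bar>real i - real (Suc n)\<bar>) = real n * (real n + 1) / 2"
  proof -
    have "(\<Sum>i = 1..n. \<bar>real i - real (Suc n)\<bar>) = (\<Sum>i = 1..n. real (Suc n) - real i)"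
      by (rule sum.cong) auto
    also have "\<dots> = real n * (real n + 1) / 2"
      using sum_Icc_real[of n] by (simp add: sum_subtractf algebra_simps)
    finally show ?thesis .
  qed
  have col: "(\<Sum>j = 1..n. \<bar>real (Suc n) - real j\<bar>) = real n * (real n + 1) / 2"
    using row by (simp add: abs_minus_commute)
  have "(\<Sum>i = 1..Suc n. \<Sum>j = 1..Suc n. \<bar>real i - real j\<bar>)
      = (\<Sum>i = 1..n. \<Sum>j = 1..n. \<bar>real i - real j\<bar>)
        + (\<Sum>i = 1..n. \<bar>real i - real (Suc n)\<bar>) + (\<Sum>j = 1..n. \<bar>real (Suc n) - real j\<bar>)"
    by (simp add: sum.distrib)
  with Suc.IH row col show ?case by (simp add: algebra_simps)
qed simp

locale broom_component = tree_component +
  assumes root_not_leaf: "\<not> leaf V E x"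
    and unique_broom_vertex: "card {b \<in> C. broom_vertex V E b} = 1"
begin

definition hub :: 'a where
  "hub = (THE b. b \<in> C \<and> broom_vertex V E b)"

definition leaves :: "'a set" where
  "leaves = {v \<in> C. leaf V E v}"

lemma hub_unique: "b \<in> C \<Longrightarrow> broom_vertex V E b \<Longrightarrow> b = hub"
  and hub_in_component: "hub \<in> C"
  and hub_broom_vertex: "broom_vertex V E hub"
proof -
  obtain b0 where b0: "{b \<in> C. broom_vertex V E b} = {b0}"
    using unique_broom_vertex by (rule card_1_singletonE)
  then have "hub = b0" unfolding hub_def by (intro the_equality) auto
  with b0 show "b \<in> C \<Longrightarrow> broom_vertex V E b \<Longrightarrow> b = hub" "hub \<in> C" "broom_vertex V E hub"
    by auto
qed

lemma leaf_adjacent_hub: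
  assumes "l \<in> leaves"
  shows "E l hub"
proof -
  have l: "l \<in> C" "leaf V E l" using assms by (auto simp: leaves_def)
  then have "card {v \<in> V. E l v} = 1" by (simp add: leaf_def degree_def)
  then obtain c where "{v \<in> V. E l v} = {c}" by (rule card_1_singletonE)
  then have c: "E l c" and c_unique: "\<And>w. E l w \<Longrightarrow> w = c" using edge_in_V by blast+
  have "c \<noteq> x"
  proof
    assume "c = x"
    obtain y where y: "leaf V E y" "E hub y" using hub_broom_vertex by (auto simp: broom_vertex_def)
    have "hub \<noteq> l"
      using y c_unique \<open>c = x\<close> root_not_leaf by blast
    then obtain w where "w \<in> C" "E l w"
      using component_has_neighbour l(1) hub_in_component by metis
    then show False using c_unique \<open>c = x\<close> root_notin_component by blast
  qed
  then have "c \<in> C" using component_closed l(1) c by blast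
  moreover have "broom_vertex V E c" using c l(2) edge_sym edge_in_V
    by (auto simp: broom_vertex_def)
  ultimately show ?thesis using hub_unique c by blast
qed

definition depth :: nat where
  "depth = dist V E x hub"

definition spine :: "'a list" where
  "spine = tree_path x hub"

lemma spine: "walk V E spine" "distinct spine" "hd spine = x" "last spine = hub"
  using tree_path[OF root_in_V] hub_in_component component_subset
  unfolding spine_def by auto

lemma length_spine: "length spine = Suc depth"
  using length_tree_path[OF root_in_V] hub_in_component component_subset
  unfolding spine_def depth_def by auto

lemma spine_nonempty: "spine \<noteq> []"
  using length_spine by auto

lemma spine_first: "spine ! 0 = x"
  using spine(3) hd_conv_nth[OF spine_nonempty] by simp

lemma spine_last: "spine ! depth = hub"
  using spine(4) last_conv_nth[OF spine_nonempty] length_spine by simp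

lemma depth_pos: "0 < depth"
  using spine_first spine_last hub_in_component root_notin_component by (cases depth) auto

lemma spine_not_leaf:
  assumes "i \<le> depth"
  shows "\<not> leaf V E (spine ! i)"
proof -
  have inner: "\<not> leaf V E (spine ! j)" if "j < depth" for j
    using that interior_not_leaf[OF spine(1,2), of j] root_not_leaf spine_first length_spine
    by (cases "j = 0") auto
  show ?thesis
  proof (cases "i = depth")
    case True
    txt \<open>The hub has a leaf neighbour and the spine vertex before it, which is not a leaf.\<close>
    obtain y where y: "leaf V E y" "E hub y" using hub_broom_vertex by (auto simp: broom_vertex_def)
    have "E (spine ! (depth - 1)) (spine ! depth)"
      using successively_nth[of E spine "depth - 1"] spine(1) length_spine depth_pos
      by (simp add: walk_def)
    then have "E hub (spine ! (depth - 1))" using spine_last edge_sym by simp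
    moreover have "\<not> leaf V E (spine ! (depth - 1))" using inner depth_pos by simp
    ultimately show ?thesis
      using True y spine_last leaf_neighbour_unique by metis
  qed (use assms inner in simp)
qed

lemma leaf_not_on_spine: "l \<in> leaves \<Longrightarrow> l \<notin> set spine"
  using spine_not_leaf length_spine by (auto simp: leaves_def in_set_conv_nth less_Suc_eq_le)

lemma spine_tail_in_component: "set (tl spine) \<subseteq> C"
proof
  fix v assume v: "v \<in> set (tl spine)"
  have tl: "tl spine \<noteq> []" "successively E (tl spine)" "x \<notin> set (tl spine)"
    using spine length_spine depth_pos
    by (cases spine; auto simp: walk_def successively_Cons)+
  then have "hub \<in> set (tl spine)" using spine(4) by (metis last_in_set last_tl)
  then show "v \<in> C"
    using walk_avoiding_root[OF tl(2,3)] v hub_in_component by blast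
qed

lemma component_eq: "C = set (tl spine) \<union> leaves"
proof (intro equalityI subsetI)
  fix v assume v: "v \<in> C"
  then have "v \<in> V" "x \<noteq> v" using component_subset root_notin_component by auto
  then obtain ws l where ys: "walk V E (x # ws @ [l])" "distinct (x # ws @ [l])" "leaf V E l"
    "v \<in> set (ws @ [l])"
    by (rule path_through_to_leaf[OF root_in_V])
  txt \<open>The leaf l lies in C, so its unique neighbour, the last vertex of x # ws, is the hub,
    and x # ws is the path from x to the hub.\<close>
  have "successively E (ws @ [l])" "x \<notin> set (ws @ [l])"
    using ys(1,2) by (auto simp: walk_def successively_Cons)
  then have "l \<in> leaves" using walk_avoiding_root[of "ws @ [l]"] v ys(3,4)
    by (auto simp: leaves_def)
  have "successively E ((x # ws) @ [l])" using ys(1) by (simp add: walk_def)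
  then have "successively E (x # ws)" "E (last (x # ws)) l"
    unfolding successively_append_iff by simp_all
  then have bs: "walk V E (x # ws)" "distinct (x # ws)" "E (last (x # ws)) l"
    using ys(1,2) by (auto simp: walk_def)
  then have "last (x # ws) = hub"
    using leaf_adjacent_hub[OF \<open>l \<in> leaves\<close>] ys(3) edge_sym leaf_neighbour_unique by blast
  then have "tl spine = ws" using tree_path_unique[OF bs(1,2)] unfolding spine_def by simp
  then show "v \<in> set (tl spine) \<union> leaves" using ys(4) \<open>l \<in> leaves\<close> by auto
qed (use spine_tail_in_component leaves_def in auto)

lemma tl_spine: "tl spine = map ((!) spine) [1..<Suc depth]"
  by (rule nth_equalityI) (simp_all add: length_spine nth_tl del: upt_Suc)

lemma sum_over_component:
  "(\<Sum>w\<in>C. f w) = (\<Sum>i = 1..depth. f (spine ! i)) + (\<Sum>l\<in>leaves. f l)"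
proof -
  have "set (tl spine) = (!) spine ` {1..depth}"
    by (simp add: tl_spine atLeastLessThanSuc_atLeastAtMost del: upt_Suc)
  moreover have "inj_on ((!) spine) {1..depth}"
    using spine(2) length_spine by (intro inj_on_nth) auto
  moreover have "set (tl spine) \<inter> leaves = {}"
    using leaf_not_on_spine list.set_sel(2)[OF spine_nonempty] by blast
  moreover have "finite leaves" using finite_component by (simp add: leaves_def)
  ultimately show ?thesis
    by (subst component_eq) (simp add: sum.union_disjoint sum.reindex)
qed

lemma leaves_in_V: "l \<in> leaves \<Longrightarrow> l \<in> V"
  using component_subset by (auto simp: leaves_def)

lemma card_component: "card C = depth + card leaves"
  using sum_over_component[of "\<lambda>_. 1 :: nat"] by simp

lemma dist_spine_spine:
  assumes "i \<le> depth" "j \<le> depth"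
  shows "real (dist V E (spine ! i) (spine ! j)) = \<bar>real i - real j\<bar>"
proof (cases "i \<le> j")
  case True
  then show ?thesis using path_nth_dist[OF spine(1,2) True] assms length_spine by simp
next
  case False
  then show ?thesis
    using path_nth_dist[OF spine(1,2), of j i] assms length_spine tree_dist_sym by simp
qed

lemma dist_spine_leaf:
  assumes "i \<le> depth" "l \<in> leaves"
  shows "dist V E (spine ! i) l = Suc depth - i"
proof -
  have "E hub l" using leaf_adjacent_hub[OF assms(2)] edge_sym by blast
  then have "walk V E (spine @ [l])"
    using spine(1,4) edge_in_V by (auto simp: walk_def successively_append_iff)
  moreover have "distinct (spine @ [l])" using spine(2) leaf_not_on_spine[OF assms(2)] by simp
  ultimately show ?thesis
    using path_nth_dist[of "spine @ [l]" i "Suc depth"] assms(1) length_spine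
    by (simp add: nth_append)
qed

lemma dist_leaf_leaf:
  assumes "l \<in> leaves" "l' \<in> leaves" "l \<noteq> l'"
  shows "dist V E l l' = 2"
proof -
  have "walk V E [l, hub, l']"
    using assms leaf_adjacent_hub edge_sym leaves_in_V hub_in_component component_subset
    by (auto simp: walk_def)
  moreover have "hub \<notin> leaves" using spine_not_leaf[of depth] spine_last by (auto simp: leaves_def)
  then have "distinct [l, hub, l']" using assms by auto
  ultimately show ?thesis using path_dist[of "[l, hub, l']"] by simp
qed

lemma sum_dist_root:
  "2 * (\<Sum>w\<in>C. real (dist V E x w))
     = real depth * (real depth + 1) + 2 * real (card leaves) * (real depth + 1)"
proof -
  have "(\<Sum>i = 1..depth. real (dist V E x (spine ! i))) = (\<Sum>i = 1..depth. real i)"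
    using dist_spine_spine[of 0] spine_first by (intro sum.cong) auto
  moreover have "(\<Sum>l\<in>leaves. real (dist V E x l)) = real (card leaves) * (real depth + 1)"
    using dist_spine_leaf[of 0] spine_first by simp
  ultimately show ?thesis
    using sum_over_component[of "\<lambda>w. real (dist V E x w)"] sum_Icc_real[of depth]
    by (simp add: algebra_simps)
qed

lemma sum_dist_hub:
  "2 * (\<Sum>w\<in>C. real (dist V E hub w))
     = real depth * (real depth - 1) + 2 * real (card leaves)"
proof -
  have "(\<Sum>i = 1..depth. real (dist V E hub (spine ! i))) = (\<Sum>i = 1..depth. real depth - real i)"
    using dist_spine_spine[of depth] spine_last by (intro sum.cong) auto
  moreover have "(\<Sum>l\<in>leaves. real (dist V E hub l)) = real (card leaves)"
    using dist_spine_leaf[of depth] spine_last by simp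
  ultimately show ?thesis
    using sum_over_component[of "\<lambda>w. real (dist V E hub w)"] sum_Icc_real[of depth]
    by (simp add: sum_subtractf algebra_simps)
qed

lemma sum_dist_root_hub:
  assumes "C \<subseteq> A" "A \<subseteq> V"
  shows "(\<Sum>u\<in>A. real (dist V E x u)) + real depth * real (card (A - C))
     = (\<Sum>u\<in>A. real (dist V E hub u)) + real depth * (real (card leaves) + 1)"
proof -
  have inside: "(\<Sum>u\<in>C. real (dist V E x u))
      = (\<Sum>u\<in>C. real (dist V E hub u)) + real depth * (real (card leaves) + 1)"
    using sum_dist_root sum_dist_hub by (simp add: algebra_simps)
  have "dist V E hub u = depth + dist V E x u" if "u \<in> A - C" for u
    using dist_through_root[OF hub_in_component, of u] that assms(2) tree_dist_sym[of x hub]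
    unfolding depth_def by auto
  then have outside: "(\<Sum>u\<in>A - C. real (dist V E hub u))
      = (\<Sum>u\<in>A - C. real (dist V E x u)) + real depth * real (card (A - C))"
    by (simp add: sum.distrib)
  have "finite A" using assms(2) finite_V by (rule finite_subset)
  have split: "(\<Sum>u\<in>A. f u) = (\<Sum>u\<in>A - C. f u) + (\<Sum>u\<in>C. f u)" for f :: "'a \<Rightarrow> real"
    by (rule sum.subset_diff[OF assms(1) \<open>finite A\<close>])
  show ?thesis using inside outside by (simp add: split)
qed

lemma sum_dist_from_spine:
  assumes "i \<in> {1..depth}"
  shows "(\<Sum>w\<in>C. real (dist V E (spine ! i) w))
    = (\<Sum>j = 1..depth. \<bar>real i - real j\<bar>) + real (card leaves) * (real depth + 1 - real i)"
  using assms dist_spine_spine dist_spine_leaf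
  by (simp add: sum_over_component[of "\<lambda>w. real (dist V E (spine ! i) w)"] of_nat_diff)

lemma sum_dist_from_leaf:
  assumes "l \<in> leaves"
  shows "(\<Sum>w\<in>C. real (dist V E l w))
    = (\<Sum>j = 1..depth. real depth + 1 - real j) + 2 * (real (card leaves) - 1)"
proof -
  have "finite leaves" using finite_component by (simp add: leaves_def)
  have "(\<Sum>j = 1..depth. real (dist V E l (spine ! j))) = (\<Sum>j = 1..depth. real depth + 1 - real j)"
    using dist_spine_leaf assms tree_dist_sym by (intro sum.cong) (auto simp: of_nat_diff)
  moreover have "(\<Sum>l'\<in>leaves. real (dist V E l l')) = 2 * (real (card leaves) - 1)"
  proof -
    have "card leaves \<ge> 1"
      using assms \<open>finite leaves\<close> card_gt_0_iff[of leaves] by (auto simp: Suc_le_eq)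
    have "(\<Sum>l'\<in>leaves. real (dist V E l l'))
        = real (dist V E l l) + (\<Sum>l'\<in>leaves - {l}. real (dist V E l l'))"
      by (rule sum.remove[OF \<open>finite leaves\<close> assms])
    also have "(\<Sum>l'\<in>leaves - {l}. real (dist V E l l')) = (\<Sum>l'\<in>leaves - {l}. 2)"
      using dist_leaf_leaf[OF assms] by (intro sum.cong) auto
    also have "\<dots> = 2 * (real (card leaves) - 1)"
      using assms \<open>finite leaves\<close> \<open>card leaves \<ge> 1\<close> by (simp add: of_nat_diff)
    finally show ?thesis using dist_same_vertex[OF leaves_in_V[OF assms]] by simp
  qed
  ultimately show ?thesis using sum_over_component[of "\<lambda>w. real (dist V E l w)"] by simp
qed

lemma sum_sum_dist:
  "3 * (\<Sum>u\<in>C. \<Sum>w\<in>C. real (dist V E u w))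
     = (real depth - 1) * real depth * (real depth + 1)
       + 3 * real (card leaves) * real depth * (real depth + 1)
       + 6 * real (card leaves) * (real (card leaves) - 1)"
proof -
  let ?q = "real depth" and ?t = "real (card leaves)"
  define D where "D = (\<Sum>i = 1..depth. \<Sum>j = 1..depth. \<bar>real i - real j\<bar>)"
  define H where "H = (\<Sum>j = 1..depth. ?q + 1 - real j)"
  have D: "D = (?q - 1) * ?q * (?q + 1) / 3" using sum_abs_diff_Icc[of depth] by (simp add: D_def)
  have H: "H = ?q * (?q + 1) / 2"
    using sum_Icc_real[of depth] by (simp add: H_def sum_subtractf algebra_simps)
  have "(\<Sum>i = 1..depth. \<Sum>w\<in>C. real (dist V E (spine ! i) w)) = D + ?t * H"
    using sum_dist_from_spine by (simp add: D_def H_def sum.distrib sum_distrib_left)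
  moreover have "(\<Sum>l\<in>leaves. \<Sum>w\<in>C. real (dist V E l w)) = ?t * (H + 2 * (?t - 1))"
    using sum_dist_from_leaf by (simp add: H_def)
  ultimately have "(\<Sum>u\<in>C. \<Sum>w\<in>C. real (dist V E u w)) = D + 2 * ?t * H + 2 * ?t * (?t - 1)"
    using sum_over_component[of "\<lambda>u. \<Sum>w\<in>C. real (dist V E u w)"] by (simp add: algebra_simps)
  then show ?thesis unfolding D H by (simp add: field_simps)
qed

end

section \<open>Replacing a component by leaves\<close>

locale component_move = tree_component +
  fixes y :: 'a
  assumes target_in_V: "y \<in> V" and target_outside: "y \<notin> C"
begin

abbreviation V' where "V' \<equiv> move_V V C"
abbreviation E' where "E' \<equiv> move_E E C y"

lemma moved_edge_sym: "E' a b \<Longrightarrow> E' b a"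
  using edge_sym by (auto simp: move_E_def split: sum.splits)

lemma distinct_walk_avoids_component:
  assumes "walk V E ws" "distinct ws" "hd ws \<notin> C" "last ws \<notin> C"
  shows "set ws \<inter> C = {}"
proof (rule ccontr)
  assume "set ws \<inter> C \<noteq> {}"
  then obtain z where z: "z \<in> set ws" "z \<in> C" by blast
  then obtain as bs where ws: "ws = as @ z # bs" by (meson split_list)
  txt \<open>Both the part of ws before z and the part after z have to pass through x.\<close>
  have "x \<in> set (as @ [z])"
  proof (rule ccontr)
    assume "x \<notin> set (as @ [z])"
    moreover have "successively E (as @ [z])" "hd (as @ [z]) = hd ws"
      using assms(1) unfolding ws walk_def by (auto simp: successively_append_iff hd_append)
    ultimately show False using walk_avoiding_root[of "as @ [z]" z] z(2) assms(3) by simp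
  qed
  moreover have "x \<in> set (z # bs)"
  proof (rule ccontr)
    assume "x \<notin> set (z # bs)"
    moreover have "successively E (z # bs)" "last ws \<in> set (z # bs)"
      using assms(1) unfolding ws walk_def by (auto simp: successively_append_iff)
    ultimately show False using walk_avoiding_root[of "z # bs" "last ws"] z(2) assms(4) by simp
  qed
  moreover have "x \<noteq> z" using z(2) root_notin_component by blast
  ultimately show False using assms(2) unfolding ws by auto
qed

lemma lift_walk:
  assumes "walk V E ws" "set ws \<inter> C = {}"
  shows "walk V' E' (map Inl ws)"
  using assms unfolding walk_def
  by (auto simp: move_V_def move_E_def successively_map elim!: successively_mono)

lemma lift_tree_path:
  assumes "u \<in> V" "u \<notin> C" "w \<in> V" "w \<notin> C"
  shows "walk V' E' (map Inl (tree_path u w))" "hd (map Inl (tree_path u w)) = Inl u"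
    "last (map Inl (tree_path u w)) = Inl w" "length (tree_path u w) = Suc (dist V E u w)"
proof -
  have tp: "walk V E (tree_path u w)" "distinct (tree_path u w)"
    "hd (tree_path u w) = u" "last (tree_path u w) = w"
    using tree_path assms(1,3) by auto
  then have "set (tree_path u w) \<inter> C = {}"
    using distinct_walk_avoids_component assms(2,4) by simp
  then show "walk V' E' (map Inl (tree_path u w))" by (rule lift_walk[OF tp(1)])
  show "hd (map Inl (tree_path u w)) = Inl u" "last (map Inl (tree_path u w)) = Inl w"
    using tp by (simp_all add: walk_def hd_map last_map)
  show "length (tree_path u w) = Suc (dist V E u w)" by (rule length_tree_path[OF assms(1,3)])
qed

lemma moved_dist_old_new:
  assumes u: "u \<in> V" "u \<notin> C"
  shows "w \<in> V \<Longrightarrow> w \<notin> C \<Longrightarrow> dist V' E' (Inl u) (Inl w) = dist V E u w"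
    and "i < card C \<Longrightarrow> dist V' E' (Inl u) (Inr i) = dist V E u y + 1"
proof -
  txt \<open>Lower bounds: this potential changes by at most one along each edge of the new tree.\<close>
  define f :: "'a + nat \<Rightarrow> nat"
    where "f z = (case z of Inl a \<Rightarrow> dist V E u a | Inr _ \<Rightarrow> dist V E u y + 1)" for z
  have lower: "f z \<le> length ys - 1" if "walk V' E' ys" "hd ys = Inl u" "last ys = z" for ys z
  proof -
    have "f b \<le> f a + 1" if "E' a b" for a b
      using that dist_across_edge[OF u(1)]
      by (auto simp: f_def move_E_def split: sum.splits)
    then show ?thesis
      using walk_lipschitz_bound[of V' E' ys f] that dist_same_vertex[OF u(1)] by (simp add: f_def)
  qed
  show "dist V' E' (Inl u) (Inl w) = dist V E u w" if "w \<in> V" "w \<notin> C"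
    using lift_tree_path[OF u that] lower[of _ "Inl w"] by (intro dist_eqI) (auto simp: f_def)
  show "dist V' E' (Inl u) (Inr i) = dist V E u y + 1" if "i < card C"
  proof (rule dist_eqI)
    note p = lift_tree_path[OF u target_in_V target_outside]
    have "Inr i \<in> V'" using that by (simp add: move_V_def)
    moreover have "E' (last (map Inl (tree_path u y))) (Inr i)"
      using that unfolding p(3) by (simp add: move_E_def)
    ultimately show "walk V' E' (map Inl (tree_path u y) @ [Inr i])"
      using p(1) by (simp add: walk_def successively_append_iff)
    show "hd (map Inl (tree_path u y) @ [Inr i]) = Inl u"
      using p(2) p(1) by (auto simp: walk_def)
  qed (use lift_tree_path[OF u target_in_V target_outside] lower[of _ "Inr i"]
    in \<open>auto simp: f_def\<close>)
qed

lemma moved_dist_new_new: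
  assumes "i < card C" "j < card C"
  shows "dist V' E' (Inr i) (Inr j) = (if i = j then 0 else 2)"
proof (cases "i = j")
  case True
  then show ?thesis using dist_same_vertex[of "Inr i" V' E'] assms by (simp add: move_V_def)
next
  case False
  define g :: "'a + nat \<Rightarrow> nat"
    where "g z = (case z of Inl _ \<Rightarrow> 1 | Inr k \<Rightarrow> if k = i then 0 else 2)" for z
  have "dist V' E' (Inr i) (Inr j) = 2"
  proof (rule dist_eqI)
    show "walk V' E' [Inr i, Inl y, Inr j]"
      using assms target_in_V target_outside by (simp add: walk_def move_V_def move_E_def)
    fix ys assume ys: "walk V' E' ys" "hd ys = Inr i" "last ys = Inr j"
    have "g b \<le> g a + 1" if "E' a b" for a b
      using that by (auto simp: g_def move_E_def split: sum.splits)
    then show "2 \<le> length ys - 1"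
      using walk_lipschitz_bound[of V' E' ys g] ys False by (simp add: g_def)
  qed simp_all
  with False show ?thesis by simp
qed

lemma sum_moved_vertices:
  "(\<Sum>z\<in>V'. f z) = (\<Sum>a\<in>V - C. f (Inl a)) + (\<Sum>i<card C. f (Inr i))"
proof -
  have "(\<Sum>z\<in>V'. f z) = (\<Sum>z\<in>Inl ` (V - C). f z) + (\<Sum>z\<in>Inr ` {..<card C}. f z)"
    unfolding move_V_def by (rule sum.union_disjoint) (use finite_V in auto)
  then show ?thesis by (simp add: sum.reindex inj_on_def)
qed

lemma sum_moved_dist_new_new:
  assumes "i < card C"
  shows "(\<Sum>j<card C. dist V' E' (Inr i) (Inr j)) = 2 * (card C - 1)"
proof -
  have "(\<Sum>j<card C. dist V' E' (Inr i) (Inr j)) = (\<Sum>j<card C. if i = j then 0 else 2)"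
    using moved_dist_new_new assms by simp
  also have "\<dots> = (\<Sum>j\<in>{..<card C} - {i}. if i = j then 0 else 2)"
    using sum.remove[of "{..<card C}" i "\<lambda>j. if i = j then 0 else 2 :: nat"] assms by simp
  also have "\<dots> = (\<Sum>j\<in>{..<card C} - {i}. 2)" by (rule sum.cong) auto
  finally show ?thesis using assms by simp
qed

lemma double_wiener_moved:
  "2 * wiener V' E' = (\<Sum>u\<in>V - C. \<Sum>v\<in>V - C. dist V E u v)
     + 2 * (card C * ((\<Sum>u\<in>V - C. dist V E y u) + card (V - C)))
     + 2 * (card C * (card C - 1))"
proof -
  let ?A = "V - C" and ?m = "card C" and ?d' = "dist V' E'"
  have old_row: "(\<Sum>z\<in>V'. ?d' (Inl a) z) = (\<Sum>b\<in>?A. dist V E a b) + ?m * (dist V E y a + 1)"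
    if "a \<in> ?A" for a
    using that moved_dist_old_new tree_dist_sym[of a y] by (simp add: sum_moved_vertices)
  have new_row: "(\<Sum>z\<in>V'. ?d' (Inr i) z) = ((\<Sum>b\<in>?A. dist V E y b) + card ?A) + 2 * (?m - 1)"
    if "i < ?m" for i
  proof -
    have "?d' (Inr i) (Inl b) = dist V E y b + 1" if "b \<in> ?A" for b
      using moved_dist_old_new(2)[of b i] that \<open>i < ?m\<close> dist_sym[of E' V', OF moved_edge_sym]
        tree_dist_sym[of b y] by auto
    then have "(\<Sum>b\<in>?A. ?d' (Inr i) (Inl b)) = (\<Sum>b\<in>?A. dist V E y b) + card ?A"
      by (simp add: sum_Suc)
    then show ?thesis using sum_moved_dist_new_new[OF that] by (simp add: sum_moved_vertices)
  qed
  have "2 * wiener V' E' = (\<Sum>u\<in>V'. \<Sum>v\<in>V'. ?d' u v)"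
  proof (rule double_wiener)
    show "finite V'" using finite_V by (simp add: move_V_def)
  qed (rule moved_edge_sym)
  also have "\<dots> = (\<Sum>a\<in>?A. (\<Sum>b\<in>?A. dist V E a b) + ?m * (dist V E y a + 1))
      + ?m * (((\<Sum>b\<in>?A. dist V E y b) + card ?A) + 2 * (?m - 1))"
    using old_row new_row by (simp add: sum_moved_vertices)
  also have "(\<Sum>a\<in>?A. (\<Sum>b\<in>?A. dist V E a b) + ?m * (dist V E y a + 1))
      = (\<Sum>a\<in>?A. \<Sum>b\<in>?A. dist V E a b) + ?m * ((\<Sum>b\<in>?A. dist V E y b) + card ?A)"
    by (simp add: sum.distrib sum_distrib_left[symmetric] sum_Suc algebra_simps)
  finally show ?thesis by (simp add: add_mult_distrib2 mult.left_commute)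
qed

end

section \<open>The Wiener index difference\<close>

lemma nonneg_iff_sqrt_threshold:
  fixes t p n :: real
  assumes "3 / 2 \<le> t + p"
  shows "0 \<le> 12 * t\<^sup>2 + 24 * t * p - 36 * t + 10 * p\<^sup>2 - 29 * p + 24 - 3 * p * n \<longleftrightarrow>
    sqrt ((p * (3 * n + 2 * p - 7) + 3) / 12) - p + 3 / 2 \<le> t"
proof -
  define b X where "b = t + p - 3 / 2" and "X = (p * (3 * n + 2 * p - 7) + 3) / 12"
  have "12 * t\<^sup>2 + 24 * t * p - 36 * t + 10 * p\<^sup>2 - 29 * p + 24 - 3 * p * n = 12 * (b\<^sup>2 - X)"
    unfolding b_def X_def by (simp add: field_simps power2_eq_square)
  then have "0 \<le> 12 * t\<^sup>2 + 24 * t * p - 36 * t + 10 * p\<^sup>2 - 29 * p + 24 - 3 * p * n \<longleftrightarrow> X \<le> b\<^sup>2"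
    by simp
  also have "\<dots> \<longleftrightarrow> sqrt X \<le> b"
    using assms real_le_lsqrt sqrt_le_D unfolding b_def by fastforce
  also have "\<dots> \<longleftrightarrow> sqrt X - p + 3 / 2 \<le> t"
    unfolding b_def by (rule iffI; linarith)
  finally show ?thesis unfolding X_def .
qed

locale broom_pair = tree_graph +
  fixes x :: 'a and C1 C2 :: "'a set"
  assumes broom1: "broom_component V E x C1" and broom2: "broom_component V E x C2"
    and distinct_components: "C1 \<noteq> C2"
begin

sublocale B1: broom_component V E x C1 by (rule broom1)
sublocale B2: broom_component V E x C2 by (rule broom2)

lemma components_disjoint: "C1 \<inter> C2 = {}"
  using B1.other_component_subset[OF B2.component] B2.other_component_subset[OF B1.component]
    distinct_components by blast

lemma wiener_move_difference:
  fixes q t1 t2 n :: real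
  defines "q \<equiv> real B1.depth" and "t1 \<equiv> real (card B1.leaves)" and "t2 \<equiv> real (card B2.leaves)"
    and "n \<equiv> real (card V)"
  assumes equal_depth: "B1.depth = B2.depth"
  shows "6 * (real (wiener V E) - real (wiener (move_V V C2) (move_E E C2 B1.hub)))
    = q * (6 * (q + t2) * (2 * t1 + q + 1) + 3 * (q + 1) * (q + t2) - 3 * (q + 1) * n
           + q\<^sup>2 + 3 * q * t2 - 9 * t2 - 6 * q + 5)"
proof -
  interpret M: component_move V E x C2 B1.hub
    using B1.hub_in_component B1.component_subset components_disjoint
    by unfold_locales auto
  let ?A = "V - C2"
  define a m within_A root_to_C2 root_to_A hub_to_A within_C2 where
    "a = real (card ?A)" and "m = real (card C2)"
    and "within_A = (\<Sum>u\<in>?A. \<Sum>v\<in>?A. real (dist V E u v))"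
    and "root_to_C2 = (\<Sum>v\<in>C2. real (dist V E x v))" and "root_to_A = (\<Sum>u\<in>?A. real (dist V E x u))"
    and "hub_to_A = (\<Sum>u\<in>?A. real (dist V E B1.hub u))"
    and "within_C2 = (\<Sum>u\<in>C2. \<Sum>v\<in>C2. real (dist V E u v))"
  have W: "real (wiener V E) = (within_A + 2 * (a * root_to_C2 + m * root_to_A) + within_C2) / 2"
    using B2.double_wiener_split[THEN arg_cong[where f = real]]
    by (simp add: a_def m_def within_A_def root_to_C2_def root_to_A_def within_C2_def)
  have "card C2 \<ge> 1"
    using B2.finite_component B2.component_nonempty by (simp add: Suc_le_eq card_gt_0_iff)
  then have W': "real (wiener (move_V V C2) (move_E E C2 B1.hub))
      = (within_A + 2 * (m * (hub_to_A + a)) + 2 * (m * (m - 1))) / 2"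
    using M.double_wiener_moved[THEN arg_cong[where f = real]]
    by (simp add: a_def m_def within_A_def hub_to_A_def of_nat_diff)
  have root_to_C2: "root_to_C2 = (q * (q + 1) + 2 * t2 * (q + 1)) / 2"
    using B2.sum_dist_root equal_depth by (simp add: root_to_C2_def q_def t2_def)
  have within_C2: "within_C2 = ((q - 1) * q * (q + 1)
      + 3 * t2 * q * (q + 1) + 6 * t2 * (t2 - 1)) / 3"
    using B2.sum_sum_dist equal_depth by (simp add: within_C2_def q_def t2_def)
  have "C1 \<subseteq> ?A" using components_disjoint B1.component_subset by blast
  moreover have "card C1 \<le> card ?A" using \<open>C1 \<subseteq> ?A\<close> finite_V by (simp add: card_mono)
  ultimately have "real (card (?A - C1)) = a - (q + t1)"
    using B1.card_component B1.finite_component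
    by (simp add: a_def q_def t1_def card_Diff_subset of_nat_diff)
  then have root_to_A: "root_to_A = hub_to_A + q * (t1 + 1) - q * (a - (q + t1))"
    using B1.sum_dist_root_hub[OF \<open>C1 \<subseteq> ?A\<close>] by (simp add: root_to_A_def hub_to_A_def q_def t1_def)
  have m: "m = q + t2" using B2.card_component equal_depth by (simp add: m_def q_def t2_def)
  have a: "a = n - (q + t2)"
    using m card_Diff_subset[OF B2.finite_component B2.component_subset]
      card_mono[OF finite_V B2.component_subset]
    by (simp add: a_def m_def n_def of_nat_diff)
  show ?thesis unfolding W W' root_to_C2 within_C2 root_to_A a m
    by (simp add: field_simps power2_eq_square)
qed

lemma wiener_move_le_iff:
  fixes p t1 n :: real
  defines "p \<equiv> real B1.depth + 1" and "t1 \<equiv> real (card B1.leaves)" and "n \<equiv> real (card V)"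
  assumes "B1.depth = B2.depth" and "card B1.leaves = card B2.leaves + 1"
  shows "wiener (move_V V C2) (move_E E C2 B1.hub) \<le> wiener V E \<longleftrightarrow>
    sqrt ((p * (3 * n + 2 * p - 7) + 3) / 12) - p + 3 / 2 \<le> t1"
proof -
  define q where "q = real B1.depth"
  have "q \<ge> 1" using B1.depth_pos by (simp add: q_def)
  have difference: "6 * (real (wiener V E) - real (wiener (move_V V C2) (move_E E C2 B1.hub)))
      = q * (12 * t1\<^sup>2 + 24 * t1 * p - 36 * t1 + 10 * p\<^sup>2 - 29 * p + 24 - 3 * p * n)"
    (is "_ = q * ?P")
    using wiener_move_difference assms(4,5) unfolding p_def t1_def n_def q_def
    by (simp add: algebra_simps power2_eq_square)
  have "wiener (move_V V C2) (move_E E C2 B1.hub) \<le> wiener V E \<longleftrightarrow>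
      0 \<le> 6 * (real (wiener V E) - real (wiener (move_V V C2) (move_E E C2 B1.hub)))"
    by simp
  also have "\<dots> \<longleftrightarrow> 0 \<le> ?P" unfolding difference using \<open>q \<ge> 1\<close> by (simp add: zero_le_mult_iff)
  also have "\<dots> \<longleftrightarrow> sqrt ((p * (3 * n + 2 * p - 7) + 3) / 12) - p + 3 / 2 \<le> t1"
    using \<open>q \<ge> 1\<close> by (intro nonneg_iff_sqrt_threshold) (simp add: p_def q_def t1_def)
  finally show ?thesis .
qed

end

theorem mainTheorem7:
  fixes V :: "'a set" and E :: "'a \<Rightarrow> 'a \<Rightarrow> bool"
    and x y1 y2 y1' :: 'a and T1 T2 :: "'a set"
  assumes "max_wiener_tree V E"
    and "special_vertex V E x"
    and "T1 \<noteq> T2" and "special_pair V E x T1 T2"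
    and "y1 \<in> T1" and "leaf V E y1" and "y2 \<in> T2" and "leaf V E y2"
    and "broom_vertex V E y1'" and "E y1 y1'"
    and "dist V E x y1 = dist V E x y2"
    and "card {y \<in> T1. leaf V E y} = card {y \<in> T2. leaf V E y} + 1"
  shows "wiener V E \<ge> wiener (move_V V T2) (move_E E T2 y1') \<longleftrightarrow>
    real (card {y \<in> T1. leaf V E y}) \<ge>
      sqrt ((real (dist V E x y1) * (3 * real (card V) + 2 * real (dist V E x y1) - 7) + 3) / 12)
      - real (dist V E x y1) + 3 / 2"
proof -
  interpret tree_graph V E using assms(1) by unfold_locales (simp add: max_wiener_tree_def)
  have "x \<in> V" "\<not> leaf V E x" using assms(2) by (auto simp: special_vertex_def leaf_def)
  then interpret broom_pair V E x T1 T2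
    using assms(3,4) tree by unfold_locales (auto simp: special_pair_def)
  have y1': "y1' = B1.hub"
    using leaf_neighbour_unique[OF assms(6,10)] B1.leaf_adjacent_hub[of y1] assms(5,6)
    by (simp add: B1.leaves_def)
  have p: "dist V E x y1 = Suc B1.depth" "dist V E x y2 = Suc B2.depth"
    using B1.dist_spine_leaf[of 0 y1] B2.dist_spine_leaf[of 0 y2] B1.spine_first B2.spine_first
      assms(5-8) by (simp_all add: B1.leaves_def B2.leaves_def)
  show ?thesis
    using wiener_move_le_iff p assms(11,12) unfolding y1'
    by (simp add: B1.leaves_def B2.leaves_def add.commute)
qed

end
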